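(* Let $l,l'$ be two nonparallel lines intersecting at a point $O$, and let $X,X'$ be two points lying in the same quadrant divided by $l,l'$. Let $Q(X,X',l,l')$ denote the unique (possibly degenerate) parallelogram that has a pair of opposite corners at $X,X'$ and its other two corners on $l$ and $l'$ respectively. Let $\theta$ denote the angle of the quadrant divided by $l,l'$ that contains $X,X'$. Then \begin{equation*} Area\left(Q(X,X',l,l')\right)=\left| d_l(X)\,d_{l'}(X)-d_l(X')\,d_{l'}(X')\right| / \sin \theta, \end{equation*} where $d_l(Z)$ denotes the distance from a point $Z$ to the line $l$.
   Context: Concretely, $Q(X,X',l,l')$ is constructed as follows: let $M$ be the midpoint of $X$ and $X'$; let $Y$ be the intersection of $l$ with the reflection of $l'$ about $M$, and $Y'$ the intersection of $l'$ with the reflection of $l$ about $M$. Then $Y,Y'$ is the unique pair of points with $Y\in l$, $Y'\in l'$ and midpoint $M$, so $XYX'Y'$ is a parallelogram (possibly degenerate, i.e., with all four corners on one line), and it is the unique such parallelogram with opposite corners $X,X'$ and the other two corners on $l,l'$ respectively. The quantity $d_l(Z)\,d_{l'}(Z)$ is called the distance-product of $Z$ to the lines $l,l'$. *)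

theory Defs
  imports "HOL-Analysis.Analysis"
begin

definition is_line :: "(real^2) set \<Rightarrow> bool" where
  "is_line L \<longleftrightarrow> (\<exists>P v. v \<noteq> 0 \<and> L = {P + t *\<^sub>R v | t. True})"

definition dist_line :: "(real^2) set \<Rightarrow> real^2 \<Rightarrow> real" where
  "dist_line L Z = infdist Z L"

definition quadrant :: "real^2 \<Rightarrow> real^2 \<Rightarrow> real^2 \<Rightarrow> (real^2) set" where
  "quadrant P0 u v = {P0 + a *\<^sub>R u + b *\<^sub>R v | a b. a \<ge> 0 \<and> b \<ge> 0}"

definition vec_angle :: "real^2 \<Rightarrow> real^2 \<Rightarrow> real" where
  "vec_angle u v = arccos ((u \<bullet> v) / (norm u * norm v))"

text \<open>Q(X,X',l,l'): the parallelogram X Y X' Y' with Y on l, Y' on l', and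
  midpoint of Y,Y' equal to the midpoint of X,X' (unique for nonparallel lines).\<close>
definition para_Q :: "real^2 \<Rightarrow> real^2 \<Rightarrow> (real^2) set \<Rightarrow> (real^2) set \<Rightarrow> (real^2) set" where
  "para_Q X X' l l' =
     (let (Y, Y') = (THE p. fst p \<in> l \<and> snd p \<in> l' \<and> midpoint (fst p) (snd p) = midpoint X X')
      in convex hull {X, Y, X', Y'})"

definition area :: "(real^2) set \<Rightarrow> real" where
  "area S = measure lebesgue S"

end

theory Submission
  imports Defs
begin

text \<open>Write \<open>X = O + a u + b v\<close> and \<open>X' = O + a' u + b' v\<close> in the oblique frame of the two lines,
  with \<open>a, b, a', b' \<ge> 0\<close> on the quadrant. The parallelogram has the further corners
  \<open>O + (a + a') u\<close> and \<open>O + (b + b') v\<close>, so its area is the absolute value of a determinant,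
  \<open>|a b - a' b'| |u \<times> v|\<close>. On the other hand \<open>d\<^sub>l(X) = b |u \<times> v| / |u|\<close>,
  \<open>d\<^sub>l\<^sub>'(X) = a |u \<times> v| / |v|\<close> and \<open>sin \<theta> = |u \<times> v| / (|u| |v|)\<close>, and both sides agree.\<close>

definition cross2 :: "real^2 \<Rightarrow> real^2 \<Rightarrow> real" where
  "cross2 p q = p$1 * q$2 - p$2 * q$1"

definition param_line :: "real^2 \<Rightarrow> real^2 \<Rightarrow> (real^2) set" where
  "param_line P u = {P + t *\<^sub>R u | t. True}"

lemma inner_vec2: "(p::real^2) \<bullet> q = p$1 * q$1 + p$2 * q$2"
  by (simp add: inner_vec_def sum_2)

lemma norm_vec2_square: "(norm (p::real^2))^2 = p$1^2 + p$2^2"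
  unfolding power2_norm_eq_inner inner_vec2 by (simp add: power2_eq_square)

lemma cross2_square_add_inner_square: "(cross2 p q)^2 + (p \<bullet> q)^2 = (norm p)^2 * (norm q)^2"
  unfolding norm_vec2_square by (simp add: cross2_def inner_vec2 power2_eq_square algebra_simps)

lemma abs_cross2_le: "\<bar>cross2 p q\<bar> \<le> norm p * norm q"
proof (rule power2_le_imp_le)
  have "0 \<le> (p \<bullet> q)^2" by simp
  then show "\<bar>cross2 p q\<bar>^2 \<le> (norm p * norm q)^2"
    using cross2_square_add_inner_square[of p q] unfolding power_mult_distrib power2_abs by linarith
qed simp

lemma cross2_commute: "cross2 q p = - cross2 p q"
  by (simp add: cross2_def)

lemma cross2_scaleR_add:
  "cross2 (a *\<^sub>R u + b *\<^sub>R v) (c *\<^sub>R u + d *\<^sub>R v) = (a * d - b * c) * cross2 u v"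
  by (simp add: cross2_def algebra_simps)

lemma cross2_translate: "cross2 (p - t *\<^sub>R q) q = cross2 p q"
  by (simp add: cross2_def algebra_simps)

lemma cross2_eq_0_imp_parallel:
  assumes "cross2 u v = 0" "u \<noteq> 0"
  shows "\<exists>c. v = c *\<^sub>R u"
proof (cases "u$1 = 0")
  case False
  then have "v = (v$1 / u$1) *\<^sub>R u"
    using assms unfolding cross2_def by (auto simp: vec_eq_iff forall_2 field_simps)
  then show ?thesis by blast
next
  case True
  then have "u$2 \<noteq> 0" using assms(2) by (auto simp: vec_eq_iff forall_2)
  then have "v = (v$2 / u$2) *\<^sub>R u"
    using assms True unfolding cross2_def by (auto simp: vec_eq_iff forall_2 field_simps)
  then show ?thesis by blast
qed

lemma cross2_neq_0_imp_independent:
  assumes "cross2 u v \<noteq> 0" "s *\<^sub>R u + t *\<^sub>R v = 0"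
  shows "s = 0" "t = 0"
proof -
  have "0 = cross2 (s *\<^sub>R u + t *\<^sub>R v) (1 *\<^sub>R u + 0 *\<^sub>R v)"
    "0 = cross2 (0 *\<^sub>R u + 1 *\<^sub>R v) (s *\<^sub>R u + t *\<^sub>R v)"
    using assms(2) by (simp_all add: cross2_def)
  then show "s = 0" "t = 0" using assms(1) unfolding cross2_scaleR_add by simp_all
qed

lemma is_line_eq_param_line:
  assumes "is_line l" "P \<in> l" "P + u \<in> l" "u \<noteq> 0"
  shows "l = param_line P u"
proof -
  obtain Q w where l: "l = {Q + t *\<^sub>R w | t. True}"
    using assms(1) unfolding is_line_def by blast
  obtain t0 where t0: "P = Q + t0 *\<^sub>R w" using assms(2) l by blast
  obtain t1 where t1: "P + u = Q + t1 *\<^sub>R w" using assms(3) l by blast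
  have u: "u = (t1 - t0) *\<^sub>R w" using t0 t1 by (simp add: algebra_simps)
  with assms(4) have "t1 - t0 \<noteq> 0" by auto
  then have "((t - t0) / (t1 - t0)) *\<^sub>R u = (t - t0) *\<^sub>R w" for t by (simp add: u)
  then have "Q + t *\<^sub>R w = P + ((t - t0) / (t1 - t0)) *\<^sub>R u" for t
    by (simp add: t0 algebra_simps)
  moreover have "P + s *\<^sub>R u = Q + (t0 + s * (t1 - t0)) *\<^sub>R w" for s
    by (simp add: u t0 algebra_simps)
  ultimately show ?thesis unfolding l param_line_def by blast
qed

text \<open>The minimum is attained at the orthogonal projection, where Lagrange's identity
  \<open>(p \<times> u)\<^sup>2 + (p \<bullet> u)\<^sup>2 = |p|\<^sup>2 |u|\<^sup>2\<close> gives the value.\<close>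

lemma infdist_param_line:
  assumes "u \<noteq> 0"
  shows "infdist Z (param_line P u) = \<bar>cross2 (Z - P) u\<bar> / norm u"
proof (rule antisym)
  define w where "w = Z - P"
  define t where "t = (w \<bullet> u) / (norm u)^2"
  have nu: "norm u > 0" using assms by simp
  have "(dist Z (P + t *\<^sub>R u))^2 = (w - t *\<^sub>R u) \<bullet> (w - t *\<^sub>R u)"
    by (simp add: dist_norm w_def power2_norm_eq_inner algebra_simps)
  also have "\<dots> = w \<bullet> w - 2 * t * (w \<bullet> u) + t^2 * (u \<bullet> u)"
    by (simp add: inner_diff_left inner_diff_right algebra_simps power2_eq_square inner_commute)
  also have "\<dots> = (norm w)^2 - (w \<bullet> u)^2 / (norm u)^2"
    using nu by (simp add: t_def field_simps power2_eq_square flip: power2_norm_eq_inner)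
  also have "\<dots> = (\<bar>cross2 w u\<bar> / norm u)^2"
    using cross2_square_add_inner_square[of w u] nu by (simp add: field_simps)
  finally have "dist Z (P + t *\<^sub>R u) = \<bar>cross2 w u\<bar> / norm u"
    by (simp add: power2_eq_iff_nonneg)
  then show "infdist Z (param_line P u) \<le> \<bar>cross2 (Z - P) u\<bar> / norm u"
    unfolding w_def param_line_def by (metis (mono_tags, lifting) infdist_le mem_Collect_eq)
next
  have "\<bar>cross2 (Z - P) u\<bar> / norm u \<le> dist Z (P + s *\<^sub>R u)" for s
  proof -
    have "\<bar>cross2 (Z - P) u\<bar> = \<bar>cross2 (Z - (P + s *\<^sub>R u)) u\<bar>"
      using cross2_translate[of "Z - P" s u] by (simp add: diff_diff_eq)
    also have "\<dots> \<le> norm (Z - (P + s *\<^sub>R u)) * norm u" by (rule abs_cross2_le)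
    finally show ?thesis using assms by (simp add: dist_norm divide_le_eq)
  qed
  moreover have "param_line P u \<noteq> {}" unfolding param_line_def by blast
  ultimately show "\<bar>cross2 (Z - P) u\<bar> / norm u \<le> infdist Z (param_line P u)"
    unfolding infdist_def param_line_def by (auto intro: cINF_greatest)
qed

lemma infdist_oblique_coords:
  assumes "u \<noteq> 0"
  shows "infdist (P + a *\<^sub>R u + b *\<^sub>R v) (param_line P u) = \<bar>b\<bar> * \<bar>cross2 u v\<bar> / norm u"
proof -
  have "cross2 (P + a *\<^sub>R u + b *\<^sub>R v - P) u = cross2 (a *\<^sub>R u + b *\<^sub>R v) (1 *\<^sub>R u + 0 *\<^sub>R v)"
    by simp
  also have "\<dots> = - b * cross2 u v" by (simp only: cross2_scaleR_add) simp
  finally show ?thesis using infdist_param_line[OF assms] by (simp add: abs_mult)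
qed

lemma sin_vec_angle:
  assumes "u \<noteq> 0" "v \<noteq> 0"
  shows "sin (vec_angle u v) = \<bar>cross2 u v\<bar> / (norm u * norm v)"
proof -
  let ?c = "(u \<bullet> v) / (norm u * norm v)"
  have p: "norm u * norm v > 0" using assms by simp
  with Cauchy_Schwarz_ineq2[of u v] have c: "-1 \<le> ?c" "?c \<le> 1"
    by (auto simp: divide_le_eq le_divide_eq abs_le_iff)
  have "1 - ?c^2 = ((norm u * norm v)^2 - (u \<bullet> v)^2) / (norm u * norm v)^2"
    using p assms by (simp add: power_divide diff_divide_distrib del: divide_eq_0_iff)
  also have "\<dots> = (cross2 u v)^2 / (norm u * norm v)^2"
    using cross2_square_add_inner_square[of u v] by (simp add: power_mult_distrib)
  also have "\<dots> = (\<bar>cross2 u v\<bar> / (norm u * norm v))^2" by (simp add: power_divide)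
  finally show ?thesis unfolding vec_angle_def sin_arccos[OF c] using p by simp
qed

text \<open>The parallelogram is the image of the unit square under the affine map with linear part
  \<open>(s, t) \<mapsto> s (Y - X) + t (Y' - X)\<close>, whose determinant is the cross product.\<close>

lemma measure_parallelogram:
  fixes X Y Y' :: "real^2"
  shows "measure lebesgue (convex hull {X, Y, Y + Y' - X, Y'}) = \<bar>cross2 (Y - X) (Y' - X)\<bar>"
proof -
  define f where "f = (\<lambda>p::real^2. p$1 *\<^sub>R (Y - X) + p$2 *\<^sub>R (Y' - X))"
  define V where "V = {x::real^2. \<forall>i\<in>Basis. x \<bullet> i = 0 \<or> x \<bullet> i = 1}"
  have lin: "linear f" unfolding f_def by (rule linearI) (simp_all add: algebra_simps)
  have V: "p \<in> V \<longleftrightarrow> (p$1 = 0 \<or> p$1 = 1) \<and> (p$2 = 0 \<or> p$2 = 1)" for p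
    unfolding V_def by (auto simp: Basis_vec_def inner_axis forall_2)
  have corners: "(+) X ` f ` V = {X, Y, Y + Y' - X, Y'}"
  proof
    show "(+) X ` f ` V \<subseteq> {X, Y, Y + Y' - X, Y'}"
    proof
      fix z assume "z \<in> (+) X ` f ` V"
      then obtain p where "(p$1 = 0 \<or> p$1 = 1) \<and> (p$2 = 0 \<or> p$2 = 1)" "z = X + f p"
        by (auto simp: V)
      then show "z \<in> {X, Y, Y + Y' - X, Y'}" unfolding f_def by auto
    qed
    have "X = X + f (vector [0,0])" "Y = X + f (vector [1,0])"
      "Y + Y' - X = X + f (vector [1,1])" "Y' = X + f (vector [0,1])"
      unfolding f_def by (simp_all add: algebra_simps)
    moreover have "vector [0,0] \<in> V" "vector [1,0] \<in> V" "vector [1,1] \<in> V" "vector [0,1] \<in> V"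
      unfolding V by simp_all
    ultimately show "{X, Y, Y + Y' - X, Y'} \<subseteq> (+) X ` f ` V" by blast
  qed
  have hull: "convex hull {X, Y, Y + Y' - X, Y'} = (+) X ` f ` cbox 0 One"
    unfolding corners[symmetric] convex_hull_translation convex_hull_linear_image[OF lin, symmetric]
      V_def unit_interval_convex_hull[symmetric] by (simp add: comp_def)
  have "det (matrix f) = cross2 (Y - X) (Y' - X)"
    by (simp add: det_2 matrix_def f_def axis_def cross2_def)
  then show ?thesis
    unfolding hull measure_translation using measure_linear_image[OF lin, of "cbox 0 One"]
    by (simp add: content_cbox_if)
qed

lemma para_Q_param_lines:
  fixes P u v :: "real^2" and a b a' b' :: real
  assumes "cross2 u v \<noteq> 0"
  defines "X \<equiv> P + a *\<^sub>R u + b *\<^sub>R v" and "X' \<equiv> P + a' *\<^sub>R u + b' *\<^sub>R v"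
  shows "para_Q X X' (param_line P u) (param_line P v) =
    convex hull {X, P + (a + a') *\<^sub>R u, X', P + (b + b') *\<^sub>R v}"
proof -
  define Y where "Y = P + (a + a') *\<^sub>R u"
  define Y' where "Y' = P + (b + b') *\<^sub>R v"
  have "(THE p. fst p \<in> param_line P u \<and> snd p \<in> param_line P v \<and>
      midpoint (fst p) (snd p) = midpoint X X') = (Y, Y')"
  proof (rule the_equality)
    have "Y + Y' = X + X'" unfolding X_def X'_def Y_def Y'_def by (simp add: algebra_simps)
    then show "fst (Y, Y') \<in> param_line P u \<and> snd (Y, Y') \<in> param_line P v \<and>
        midpoint (fst (Y, Y')) (snd (Y, Y')) = midpoint X X'"
      unfolding param_line_def Y_def Y'_def midpoint_def by auto
  next
    fix p assume p: "fst p \<in> param_line P u \<and> snd p \<in> param_line P v \<and>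
        midpoint (fst p) (snd p) = midpoint X X'"
    then obtain s t where st: "fst p = P + s *\<^sub>R u" "snd p = P + t *\<^sub>R v"
      unfolding param_line_def by auto
    from p have "fst p + snd p = X + X'" unfolding midpoint_def by simp
    then have "(s - (a + a')) *\<^sub>R u + (t - (b + b')) *\<^sub>R v = 0"
      unfolding st X_def X'_def by (simp add: algebra_simps)
    from cross2_neq_0_imp_independent[OF assms(1) this] have "s = a + a'" "t = b + b'"
      by simp_all
    with st show "p = (Y, Y')" by (simp add: prod_eq_iff Y_def Y'_def)
  qed
  then show ?thesis unfolding para_Q_def Y_def Y'_def by simp
qed

lemma area_para_Q_param_lines:
  assumes "cross2 u v \<noteq> 0"
  shows "area (para_Q (P + a *\<^sub>R u + b *\<^sub>R v) (P + a' *\<^sub>R u + b' *\<^sub>R v)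
      (param_line P u) (param_line P v)) = \<bar>a * b - a' * b'\<bar> * \<bar>cross2 u v\<bar>"
proof -
  define X where "X = P + a *\<^sub>R u + b *\<^sub>R v"
  define Y where "Y = P + (a + a') *\<^sub>R u"
  define Y' where "Y' = P + (b + b') *\<^sub>R v"
  have X': "P + a' *\<^sub>R u + b' *\<^sub>R v = Y + Y' - X"
    unfolding X_def Y_def Y'_def by (simp add: algebra_simps)
  have "area (para_Q X (P + a' *\<^sub>R u + b' *\<^sub>R v) (param_line P u) (param_line P v))
      = \<bar>cross2 (Y - X) (Y' - X)\<bar>"
    unfolding area_def para_Q_param_lines[OF assms, of P a b a' b', folded X_def Y_def Y'_def]
    unfolding X'
    by (rule measure_parallelogram)
  also have "cross2 (Y - X) (Y' - X) = cross2 (a' *\<^sub>R u + (- b) *\<^sub>R v) ((- a) *\<^sub>R u + b' *\<^sub>R v)"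
    unfolding X_def Y_def Y'_def by (simp add: algebra_simps)
  also have "\<dots> = (a' * b' - a * b) * cross2 u v" by (simp only: cross2_scaleR_add) simp
  finally show ?thesis unfolding X_def by (simp add: abs_mult abs_minus_commute)
qed

theorem lemma9:
  fixes l l' :: "(real^2) set" and P0 X X' u v :: "real^2"
  assumes "is_line l" and "is_line l'" and "l \<inter> l' = {P0}"
    and "u \<noteq> 0" and "P0 + u \<in> l" and "v \<noteq> 0" and "P0 + v \<in> l'"
    and "X \<in> quadrant P0 u v" and "X' \<in> quadrant P0 u v"
  shows "area (para_Q X X' l l') =
    \<bar>dist_line l X * dist_line l' X - dist_line l X' * dist_line l' X'\<bar> / sin (vec_angle u v)"
proof -
  have l: "l = param_line P0 u"
    by (rule is_line_eq_param_line) (use assms(1,3-5) in auto)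
  have l': "l' = param_line P0 v"
    by (rule is_line_eq_param_line) (use assms(2,3,6,7) in auto)
  have "cross2 u v \<noteq> 0"
  proof
    assume "cross2 u v = 0"
    then obtain c where "v = c *\<^sub>R u" using cross2_eq_0_imp_parallel assms(4) by blast
    then have "P0 + v \<in> l \<inter> l'" using assms(7) unfolding l param_line_def by blast
    with assms(3,6) show False by simp
  qed
  then have k: "\<bar>cross2 u v\<bar> > 0" by simp
  obtain a b a' b' where "a \<ge> 0" "b \<ge> 0" "a' \<ge> 0" "b' \<ge> 0"
    and X: "X = P0 + a *\<^sub>R u + b *\<^sub>R v" and X': "X' = P0 + a' *\<^sub>R u + b' *\<^sub>R v"
    using assms(8,9) unfolding quadrant_def by blast
  have "dist_line l (P0 + s *\<^sub>R u + t *\<^sub>R v) = \<bar>t\<bar> * \<bar>cross2 u v\<bar> / norm u" for s t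
    unfolding l dist_line_def using infdist_oblique_coords[OF assms(4)] .
  moreover have "dist_line l' (P0 + s *\<^sub>R u + t *\<^sub>R v) = \<bar>s\<bar> * \<bar>cross2 u v\<bar> / norm v" for s t
  proof -
    have swap: "P0 + s *\<^sub>R u + t *\<^sub>R v = P0 + t *\<^sub>R v + s *\<^sub>R u" by (simp add: algebra_simps)
    show ?thesis unfolding l' dist_line_def swap
      by (simp add: infdist_oblique_coords[OF assms(6)] cross2_commute[of v u])
  qed
  moreover have "area (para_Q X X' l l') = \<bar>a * b - a' * b'\<bar> * \<bar>cross2 u v\<bar>"
    unfolding X X' l l' by (rule area_para_Q_param_lines) fact
  moreover have "\<bar>b\<bar> * k / norm u * (\<bar>a\<bar> * k / norm v) - \<bar>b'\<bar> * k / norm u * (\<bar>a'\<bar> * k / norm v)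
      = (a * b - a' * b') * k * (k / (norm u * norm v))" for k
    using assms(4,6) \<open>a \<ge> 0\<close> \<open>b \<ge> 0\<close> \<open>a' \<ge> 0\<close> \<open>b' \<ge> 0\<close> by (simp add: field_simps)
  ultimately show ?thesis
    unfolding sin_vec_angle[OF assms(4,6)] X X' using k assms(4,6) by (simp add: abs_mult)
qed

end
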